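(* A normal TDD is reduced if and only if none of the reduction rules RR1, RR2, RR3, RR4 is applicable to it.
   Context: Fix a finite index set $I$ with a linear order $\prec$. Indices take values in $\{0,1\}$; a tensor over $I$ is a map $\{0,1\}^I\to\mathbb{C}$ (tensors over subsets of $I$ are regarded as tensors over $I$ not depending on the other indices). Each index $x$ is regarded as the tensor $x(c)=c$, and $\overline{x}(c):=1-c$; operations on tensors are pointwise. A TDD over $I$ is $\mathcal F=(V,E,index,value,low,high,w)$: a rooted directed acyclic graph with finite node set $V$ partitioned into non-terminal nodes $V_N$ and terminal nodes $V_T$, root $r_{\mathcal F}$; $index:V_N\to I$; $value:V_T\to\mathbb{C}$; $low,high:V_N\to V$ (0- and 1-successors); edges are the low-edges $(v,low(v))$ and high-edges $(v,high(v))$, $v\in V_N$, plus a unique source-less incoming edge $e_r$ of the root; $w$ gives each edge a complex weight and $w_{\mathcal F}:=w(e_r)$. Node tensors: $\Phi(v)=value(v)$ for terminal $v$; otherwise $\Phi(v)=w_0\overline{x_v}\Phi(low(v))+w_1x_v\Phi(high(v))$ with $x_v=index(v)$ and $w_0,w_1$ the low-/high-edge weights. The TDD represents $\Phi(\mathcal F):=w_{\mathcal F}\Phi(r_{\mathcal F})$. Normality (w.r.t. $\prec$): the pivot of a tensor $\phi$ is the lexicographically smallest (compare at the $\prec$-smallest differing index, $0<1$) $\vec a$ with $|\phi(\vec a)|=\max_{\vec b}|\phi(\vec b)|$; $\phi$ is normal if $\phi=0$ or $\phi$ equals $1$ at its pivot. A TDD is normal if $\Phi(v)$ is normal for every node $v$.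 A TDD is reduced if it is normal and (1) $\Phi(v)\neq0$ for every node $v$; (2) all edges of weight $0$ point to the unique terminal node, which has value $1$; (3) $\Phi(u)\neq\Phi(v)$ for any two distinct nodes $u\neq v$. Reduction rules. RR1: merge all terminal nodes with value $1$; delete all terminal nodes with value $0$ (if any), redirect their incoming edges to the (unique) terminal node and reset the weights of these edges to $0$. RR2: redirect all weight-$0$ edges to the terminal node; if these include the incoming edge of the root, the terminal node becomes the new root; delete all nodes (and edges involving them) not reachable from the root. RR3: delete a node $v$ if its 0- and 1-successors are identical and its low- and high-edges have the same weight $w$ (either $0$ or $1$), redirecting its incoming edges to the terminal node with value $1$ if $w=0$ and otherwise to its successor. RR4: merge two nodes if they have the same index, the same 0- and 1-successors, and the same weights on the corresponding edges. *)

theory Defs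
  imports Complex_Main
begin

text \<open>Index set I: a finite set of a linearly ordered type; the linear order
  of the type is the order used for normality and orderedness.
  An assignment (element of the set of maps from I to the two-element set) is a
  map from indices to bool (False = 0, True = 1) that is False outside I.
  A tensor over I is a map from assignments to complex numbers; only its values
  on assignments in asg I matter.\<close>

type_synonym 'i tensor = "('i \<Rightarrow> bool) \<Rightarrow> complex"

definition asg :: "'i set \<Rightarrow> ('i \<Rightarrow> bool) set" where
  "asg I = {a. \<forall>i. i \<notin> I \<longrightarrow> \<not> a i}"

definition lex_less :: "'i::linorder set \<Rightarrow> ('i \<Rightarrow> bool) \<Rightarrow> ('i \<Rightarrow> bool) \<Rightarrow> bool" where
  "lex_less I a b \<longleftrightarrow> (\<exists>i\<in>I. \<not> a i \<and> b i \<and> (\<forall>j\<in>I. j < i \<longrightarrow> a j = b j))"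

definition is_pivot :: "'i::linorder set \<Rightarrow> 'i tensor \<Rightarrow> ('i \<Rightarrow> bool) \<Rightarrow> bool" where
  "is_pivot I \<phi> a \<longleftrightarrow> a \<in> asg I \<and> (\<forall>b\<in>asg I. cmod (\<phi> b) \<le> cmod (\<phi> a)) \<and>
     (\<forall>b\<in>asg I. cmod (\<phi> b) = cmod (\<phi> a) \<longrightarrow> b = a \<or> lex_less I a b)"

definition pivot :: "'i::linorder set \<Rightarrow> 'i tensor \<Rightarrow> ('i \<Rightarrow> bool)" where
  "pivot I \<phi> = (THE a. is_pivot I \<phi> a)"

definition zero_tensor :: "'i set \<Rightarrow> 'i tensor \<Rightarrow> bool" where
  "zero_tensor I \<phi> \<longleftrightarrow> (\<forall>a\<in>asg I. \<phi> a = 0)"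

definition tensor_eq :: "'i set \<Rightarrow> 'i tensor \<Rightarrow> 'i tensor \<Rightarrow> bool" where
  "tensor_eq I \<phi> \<psi> \<longleftrightarrow> (\<forall>a\<in>asg I. \<phi> a = \<psi> a)"

definition normal_tensor :: "'i::linorder set \<Rightarrow> 'i tensor \<Rightarrow> bool" where
  "normal_tensor I \<phi> \<longleftrightarrow> zero_tensor I \<phi> \<or> \<phi> (pivot I \<phi>) = 1"

record ('v, 'i) tdd =
  nodes :: "'v set"
  terms :: "'v set"
  root :: 'v
  idx :: "'v \<Rightarrow> 'i"
  val :: "'v \<Rightarrow> complex"
  lo :: "'v \<Rightarrow> 'v"
  hi :: "'v \<Rightarrow> 'v"
  wlo :: "'v \<Rightarrow> complex"
  whi :: "'v \<Rightarrow> complex"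
  wroot :: complex

definition nonterms :: "('v, 'i) tdd \<Rightarrow> 'v set" where
  "nonterms F = nodes F - terms F"

definition succ_rel :: "('v, 'i) tdd \<Rightarrow> ('v \<times> 'v) set" where
  "succ_rel F = {(v, lo F v) | v. v \<in> nonterms F} \<union> {(v, hi F v) | v. v \<in> nonterms F}"

definition is_tdd :: "'i set \<Rightarrow> ('v, 'i) tdd \<Rightarrow> bool" where
  "is_tdd I F \<longleftrightarrow> finite I \<and> finite (nodes F) \<and> root F \<in> nodes F \<and> terms F \<subseteq> nodes F \<and>
     (\<forall>v\<in>nonterms F. idx F v \<in> I \<and> lo F v \<in> nodes F \<and> hi F v \<in> nodes F) \<and>
     acyclic (succ_rel F) \<and>
     (\<forall>v\<in>nodes F. (root F, v) \<in> (succ_rel F)\<^sup>*)"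

definition ordered_tdd :: "('v, 'i::linorder) tdd \<Rightarrow> bool" where
  "ordered_tdd F \<longleftrightarrow> (\<forall>v\<in>nonterms F.
      (lo F v \<in> nonterms F \<longrightarrow> idx F v < idx F (lo F v)) \<and>
      (hi F v \<in> nonterms F \<longrightarrow> idx F v < idx F (hi F v)))"

text \<open>Node tensors, computed by unfolding the defining recursion
  Phi(v) = w0 * (1 - x_v) * Phi(low v) + w1 * x_v * Phi(high v)
  with a fuel parameter; in a DAG with n nodes, fuel n suffices.\<close>
primrec node_tensor_aux :: "('v, 'i) tdd \<Rightarrow> nat \<Rightarrow> 'v \<Rightarrow> 'i tensor" where
  "node_tensor_aux F 0 v a = (if v \<in> terms F then val F v else 0)"
| "node_tensor_aux F (Suc n) v a =
     (if v \<in> terms F then val F v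
      else wlo F v * (1 - (if a (idx F v) then 1 else 0)) * node_tensor_aux F n (lo F v) a
         + whi F v * (if a (idx F v) then 1 else 0) * node_tensor_aux F n (hi F v) a)"

definition node_tensor :: "('v, 'i) tdd \<Rightarrow> 'v \<Rightarrow> 'i tensor" where
  "node_tensor F v = node_tensor_aux F (card (nodes F)) v"

definition normal_tdd :: "'i::linorder set \<Rightarrow> ('v, 'i) tdd \<Rightarrow> bool" where
  "normal_tdd I F \<longleftrightarrow> (\<forall>v\<in>nodes F. normal_tensor I (node_tensor F v))"

definition reduced_tdd :: "'i::linorder set \<Rightarrow> ('v, 'i) tdd \<Rightarrow> bool" where
  "reduced_tdd I F \<longleftrightarrow> normal_tdd I F \<and>
     (\<forall>v\<in>nodes F. \<not> zero_tensor I (node_tensor F v)) \<and>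
     (\<exists>t. terms F = {t} \<and> val F t = 1 \<and>
        (\<forall>v\<in>nonterms F. (wlo F v = 0 \<longrightarrow> lo F v = t) \<and> (whi F v = 0 \<longrightarrow> hi F v = t)) \<and>
        (wroot F = 0 \<longrightarrow> root F = t)) \<and>
     (\<forall>u\<in>nodes F. \<forall>v\<in>nodes F. u \<noteq> v \<longrightarrow> \<not> tensor_eq I (node_tensor F u) (node_tensor F v))"

text \<open>Applicability of the reduction rules (i.e. applying them would change the TDD).\<close>

definition RR1_applicable :: "('v, 'i) tdd \<Rightarrow> bool" where
  "RR1_applicable F \<longleftrightarrow> (\<exists>t\<in>terms F. val F t = 0) \<or>
     (\<exists>t1\<in>terms F. \<exists>t2\<in>terms F. t1 \<noteq> t2 \<and> val F t1 = 1 \<and> val F t2 = 1)"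

definition RR2_applicable :: "('v, 'i) tdd \<Rightarrow> bool" where
  "RR2_applicable F \<longleftrightarrow>
     (\<exists>v\<in>nonterms F. (wlo F v = 0 \<and> lo F v \<notin> terms F) \<or> (whi F v = 0 \<and> hi F v \<notin> terms F)) \<or>
     (wroot F = 0 \<and> root F \<notin> terms F) \<or>
     (\<exists>v\<in>nodes F. (root F, v) \<notin> (succ_rel F)\<^sup>*)"

definition RR3_applicable :: "('v, 'i) tdd \<Rightarrow> bool" where
  "RR3_applicable F \<longleftrightarrow> (\<exists>v\<in>nonterms F. lo F v = hi F v \<and> wlo F v = whi F v \<and>
     (wlo F v = 0 \<or> wlo F v = 1))"

definition RR4_applicable :: "('v, 'i) tdd \<Rightarrow> bool" where
  "RR4_applicable F \<longleftrightarrow> (\<exists>u\<in>nonterms F. \<exists>v\<in>nonterms F. u \<noteq> v \<and> idx F u = idx F v \<and>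
     lo F u = lo F v \<and> hi F u = hi F v \<and> wlo F u = wlo F v \<and> whi F u = whi F v)"

end

theory Submission
  imports Defs "HOL-Library.Fun_Lexorder"
begin

(* The pivot of a tensor is invariant under multiplication by a nonzero scalar, so if
   a nonzero normal tensor is c times another normal tensor then c = 1.  Consequently,
   in a normal TDD where no reduction rule applies, a non-terminal node v depends on
   its own index x: otherwise both cofactors wlo*Phi(low v) and whi*Phi(high v) equal
   Phi(v), normality forces both weights to be 1 and the two children to have equal
   tensors, hence (inductively) to coincide, and RR3 would apply.  So two nodes with
   equal tensors must have the same index (or both be the unique terminal), and then
   equal cofactors give equal children and equal weights, so that RR4 would apply. *)

lemma finite_asg: "finite I \<Longrightarrow> finite (asg I)"
proof -
  assume "finite I"
  moreover have "asg I \<subseteq> (\<lambda>S i. i \<in> S) ` Pow I"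
  proof
    fix a assume "a \<in> asg I"
    then have "{i. a i} \<in> Pow I" "a = (\<lambda>i. i \<in> {i. a i})" by (auto simp: asg_def)
    then show "a \<in> (\<lambda>S i. i \<in> S) ` Pow I" by blast
  qed
  ultimately show ?thesis by (meson finite_Pow_iff finite_imageI finite_subset)
qed

lemma asg_upd: "a \<in> asg I \<Longrightarrow> x \<in> I \<Longrightarrow> a(x := b) \<in> asg I"
  unfolding asg_def by auto

lemma all_false_in_asg: "(\<lambda>_. False) \<in> asg I"
  unfolding asg_def by simp

lemma lex_less_iff_less_fun:
  assumes "a \<in> asg I" "b \<in> asg I"
  shows "lex_less I a b \<longleftrightarrow> less_fun a b"
proof -
  have "j \<notin> I \<Longrightarrow> \<not> a j \<and> \<not> b j" for j using assms by (auto simp: asg_def)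
  then show ?thesis unfolding lex_less_def less_fun_def less_bool_def by blast
qed

lemma lex_less_total:
  assumes "finite I" "a \<in> asg I" "b \<in> asg I" "a \<noteq> b"
  shows "lex_less I a b \<or> lex_less I b a"
proof -
  have "{k. a k \<noteq> b k} \<subseteq> I" using assms(2,3) by (auto simp: asg_def)
  then show ?thesis
    using less_fun_trichotomy[of a b] finite_subset assms by (auto simp: lex_less_iff_less_fun)
qed

lemma ex_lex_least:
  assumes "finite I" "S \<subseteq> asg I" "S \<noteq> {}"
  shows "\<exists>m\<in>S. \<forall>b\<in>S. b = m \<or> lex_less I m b"
proof -
  have "finite S" using assms finite_asg finite_subset by blast
  moreover have "asymp_on S (lex_less I)" "transp_on S (lex_less I)"
    using assms(2) less_fun_asym less_fun_trans
    by (auto simp: asymp_on_def transp_on_def lex_less_iff_less_fun subset_iff)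
  ultimately obtain m where "m \<in> S" "\<forall>b\<in>S. b \<noteq> m \<longrightarrow> \<not> lex_less I b m"
    using Finite_Set.bex_min_element assms(3) by blast
  then show ?thesis using lex_less_total[OF assms(1)] assms(2) by blast
qed

lemma ex_is_pivot:
  assumes "finite I"
  shows "\<exists>a. is_pivot I \<phi> a"
proof -
  define M where "M = Max ((\<lambda>b. cmod (\<phi> b)) ` asg I)"
  have fin: "finite (asg I)" using finite_asg[OF assms] .
  have le_M: "\<forall>b\<in>asg I. cmod (\<phi> b) \<le> M" unfolding M_def using fin by auto
  have "M \<in> (\<lambda>b. cmod (\<phi> b)) ` asg I"
    unfolding M_def using fin all_false_in_asg by (intro Max_in) auto
  then have "{b\<in>asg I. cmod (\<phi> b) = M} \<noteq> {}" by auto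
  then obtain m where "m \<in> asg I" "cmod (\<phi> m) = M"
    "\<forall>b\<in>asg I. cmod (\<phi> b) = M \<longrightarrow> b = m \<or> lex_less I m b"
    using ex_lex_least[OF assms, of "{b\<in>asg I. cmod (\<phi> b) = M}"] by auto
  then have "is_pivot I \<phi> m" unfolding is_pivot_def using le_M by auto
  then show ?thesis by blast
qed

lemma is_pivot_unique: "is_pivot I \<phi> a \<Longrightarrow> is_pivot I \<phi> b \<Longrightarrow> a = b"
  unfolding is_pivot_def by (metis order_antisym lex_less_iff_less_fun less_fun_asym)

lemma is_pivot_pivot: "finite I \<Longrightarrow> is_pivot I \<phi> (pivot I \<phi>)"
  unfolding pivot_def using ex_is_pivot is_pivot_unique by (metis theI)

lemma is_pivot_scaled:
  assumes "c \<noteq> 0" and "\<forall>a\<in>asg I. \<psi> a = c * \<phi> a"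
  shows "is_pivot I \<psi> = is_pivot I \<phi>"
proof -
  have "\<forall>b\<in>asg I. cmod (\<psi> b) = cmod c * cmod (\<phi> b)" using assms(2) by (simp add: norm_mult)
  moreover have "cmod c > 0" using assms(1) by simp
  ultimately show ?thesis
    unfolding is_pivot_def by (intro ext) (smt (verit) mult_le_cancel_left_pos mult_cancel_left)
qed

lemma normal_tensor_scaled_eq_1:
  assumes "finite I" "normal_tensor I \<psi>" "normal_tensor I \<phi>" "\<not> zero_tensor I \<psi>"
    and scaled: "\<forall>a\<in>asg I. \<psi> a = c * \<phi> a"
  shows "c = 1"
proof -
  have "c \<noteq> 0" "\<not> zero_tensor I \<phi>" using assms(4) scaled unfolding zero_tensor_def by auto
  then have "pivot I \<psi> = pivot I \<phi>" "\<phi> (pivot I \<phi>) = 1"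
    using is_pivot_scaled[OF _ scaled] assms(3) unfolding pivot_def normal_tensor_def by auto
  moreover have "\<psi> (pivot I \<psi>) = 1" using assms(2,4) unfolding normal_tensor_def by simp
  moreover have "pivot I \<phi> \<in> asg I" using is_pivot_pivot[OF assms(1)] unfolding is_pivot_def by blast
  ultimately show ?thesis using scaled by auto
qed

definition indep_of :: "'i set \<Rightarrow> 'i tensor \<Rightarrow> 'i \<Rightarrow> bool" where
  "indep_of I \<phi> x \<longleftrightarrow> (\<forall>a\<in>asg I. \<phi> (a(x := True)) = \<phi> (a(x := False)))"

lemma indep_ofD: "indep_of I \<phi> x \<Longrightarrow> a \<in> asg I \<Longrightarrow> \<phi> (a(x := b)) = \<phi> a"
  unfolding indep_of_def by (metis (full_types) fun_upd_triv)

lemma indep_of_tensor_eq: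
  "tensor_eq I \<phi> \<psi> \<Longrightarrow> x \<in> I \<Longrightarrow> indep_of I \<psi> x \<Longrightarrow> indep_of I \<phi> x"
  unfolding indep_of_def tensor_eq_def by (metis asg_upd)

locale wf_ordered_tdd =
  fixes I :: "'i::linorder set" and F :: "('v, 'i) tdd"
  assumes wf: "is_tdd I F" and ordered: "ordered_tdd F"
begin

abbreviation \<Phi> :: "'v \<Rightarrow> 'i tensor" where "\<Phi> \<equiv> node_tensor F"

lemma finite_I: "finite I"
  and finite_nodes: "finite (nodes F)"
  and root_node: "root F \<in> nodes F"
  and terms_nodes: "terms F \<subseteq> nodes F"
  and idx_in_I: "v \<in> nonterms F \<Longrightarrow> idx F v \<in> I"
  and lo_node: "v \<in> nonterms F \<Longrightarrow> lo F v \<in> nodes F"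
  and hi_node: "v \<in> nonterms F \<Longrightarrow> hi F v \<in> nodes F"
  and reachable: "v \<in> nodes F \<Longrightarrow> (root F, v) \<in> (succ_rel F)\<^sup>*"
  using wf unfolding is_tdd_def by auto

lemma idx_lo: "v \<in> nonterms F \<Longrightarrow> lo F v \<in> nonterms F \<Longrightarrow> idx F v < idx F (lo F v)"
  and idx_hi: "v \<in> nonterms F \<Longrightarrow> hi F v \<in> nonterms F \<Longrightarrow> idx F v < idx F (hi F v)"
  using ordered unfolding ordered_tdd_def by auto

lemma nonterm_node: "v \<in> nonterms F \<Longrightarrow> v \<in> nodes F"
  and nonterm_not_term: "v \<in> nonterms F \<Longrightarrow> v \<notin> terms F"
  and nonterm_if_not_term: "v \<in> nodes F \<Longrightarrow> v \<notin> terms F \<Longrightarrow> v \<in> nonterms F"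
  unfolding nonterms_def by auto

lemma finite_nonterms: "finite (nonterms F)"
  using finite_nodes unfolding nonterms_def by simp

text \<open>By orderedness the rank strictly decreases along edges, and it is at most the
  number of nodes; this is why the fuel card (nodes F) used by node_tensor suffices.\<close>
definition rank :: "'v \<Rightarrow> nat" where
  "rank v = (if v \<in> nonterms F then card {i \<in> idx F ` nonterms F. idx F v \<le> i} else 0)"

lemma rank_pos: "v \<in> nonterms F \<Longrightarrow> rank v > 0"
  unfolding rank_def using finite_nonterms by (auto simp: card_gt_0_iff)

lemma rank_less:
  assumes "v \<in> nonterms F" and "c \<in> nonterms F \<Longrightarrow> idx F v < idx F c"
  shows "rank c < rank v"
proof (cases "c \<in> nonterms F")
  case False
  then show ?thesis using rank_pos[OF assms(1)] unfolding rank_def by simp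
next
  case True
  have "{i \<in> idx F ` nonterms F. idx F c \<le> i} \<subset> {i \<in> idx F ` nonterms F. idx F v \<le> i}"
    using assms True by force
  then show ?thesis unfolding rank_def using True assms(1) finite_nonterms by (simp add: psubset_card_mono)
qed

lemma rank_lo: "v \<in> nonterms F \<Longrightarrow> rank (lo F v) < rank v"
  and rank_hi: "v \<in> nonterms F \<Longrightarrow> rank (hi F v) < rank v"
  using rank_less idx_lo idx_hi by blast+

lemma rank_le_card_nodes: "rank v \<le> card (nodes F)"
proof -
  have "card {i \<in> idx F ` nonterms F. idx F v \<le> i} \<le> card (idx F ` nonterms F)"
    using finite_nonterms by (intro card_mono) auto
  also have "\<dots> \<le> card (nonterms F)" using card_image_le finite_nonterms by blast
  also have "\<dots> \<le> card (nodes F)" using finite_nodes unfolding nonterms_def by (intro card_mono) auto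
  finally show ?thesis unfolding rank_def by auto
qed

lemma node_tensor_aux_term: "v \<in> terms F \<Longrightarrow> node_tensor_aux F n v a = val F v"
  by (cases n) auto

lemma node_tensor_aux_stable:
  "v \<in> nodes F \<Longrightarrow> rank v \<le> n \<Longrightarrow> rank v \<le> m \<Longrightarrow> node_tensor_aux F n v = node_tensor_aux F m v"
proof (induction n arbitrary: v m)
  case 0
  then show ?case using rank_pos nonterm_if_not_term node_tensor_aux_term by fastforce
next
  case (Suc n)
  show ?case
  proof (cases "v \<in> terms F")
    case True
    then show ?thesis using node_tensor_aux_term by auto
  next
    case False
    then have v: "v \<in> nonterms F" using Suc.prems nonterm_if_not_term by blast
    then obtain m' where m: "m = Suc m'" using rank_pos[OF v] Suc.prems(3) by (cases m) auto
    have "node_tensor_aux F n (lo F v) = node_tensor_aux F m' (lo F v)"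
      "node_tensor_aux F n (hi F v) = node_tensor_aux F m' (hi F v)"
      using Suc rank_lo[OF v] rank_hi[OF v] lo_node[OF v] hi_node[OF v] m by auto
    then show ?thesis using False m by (auto intro!: ext)
  qed
qed

lemma node_tensor_term: "v \<in> terms F \<Longrightarrow> \<Phi> v a = val F v"
  unfolding node_tensor_def by (rule node_tensor_aux_term)

lemma node_tensor_nonterm:
  assumes "v \<in> nonterms F"
  shows "\<Phi> v a = wlo F v * (1 - (if a (idx F v) then 1 else 0)) * \<Phi> (lo F v) a
     + whi F v * (if a (idx F v) then 1 else 0) * \<Phi> (hi F v) a"
proof -
  obtain k where k: "card (nodes F) = Suc k"
    using rank_pos[OF assms] rank_le_card_nodes[of v] by (cases "card (nodes F)") auto
  have lo_k: "rank (lo F v) \<le> k" and hi_k: "rank (hi F v) \<le> k"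
    using rank_lo[OF assms] rank_hi[OF assms] rank_le_card_nodes[of v] k by linarith+
  have "node_tensor_aux F k (lo F v) = \<Phi> (lo F v)"
    unfolding node_tensor_def by (rule node_tensor_aux_stable[OF lo_node[OF assms] lo_k rank_le_card_nodes])
  moreover have "node_tensor_aux F k (hi F v) = \<Phi> (hi F v)"
    unfolding node_tensor_def by (rule node_tensor_aux_stable[OF hi_node[OF assms] hi_k rank_le_card_nodes])
  ultimately show ?thesis unfolding node_tensor_def using k nonterm_not_term[OF assms] by simp
qed

lemma node_tensor_cong_above:
  assumes "v \<in> nodes F" "v \<in> nonterms F \<Longrightarrow> x < idx F v" "\<And>i. x < i \<Longrightarrow> a i = b i"
  shows "\<Phi> v a = \<Phi> v b"
  using assms(1,2)
proof (induction "rank v" arbitrary: v rule: less_induct)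
  case less
  show ?case
  proof (cases "v \<in> terms F")
    case True
    then show ?thesis using node_tensor_term by simp
  next
    case False
    then have v: "v \<in> nonterms F" using less nonterm_if_not_term by blast
    then have "x < idx F v" using less by blast
    then have "\<Phi> (lo F v) a = \<Phi> (lo F v) b" "\<Phi> (hi F v) a = \<Phi> (hi F v) b" "a (idx F v) = b (idx F v)"
      using less(1)[OF rank_lo[OF v] lo_node[OF v]] less(1)[OF rank_hi[OF v] hi_node[OF v]]
        idx_lo[OF v] idx_hi[OF v] assms(3) by (meson less_trans)+
    then show ?thesis using node_tensor_nonterm[OF v] by simp
  qed
qed

lemma node_tensor_indep_of_below:
  assumes "v \<in> nodes F" "v \<in> nonterms F \<Longrightarrow> x < idx F v"
  shows "indep_of I (\<Phi> v) x"
  unfolding indep_of_def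
proof
  fix a
  show "\<Phi> v (a(x := True)) = \<Phi> v (a(x := False))"
    by (rule node_tensor_cong_above[OF assms]) auto
qed

lemma node_tensor_lo_cofactor:
  assumes "v \<in> nonterms F"
  shows "\<Phi> v (a(idx F v := False)) = wlo F v * \<Phi> (lo F v) a"
proof -
  have "\<Phi> (lo F v) (a(idx F v := False)) = \<Phi> (lo F v) a"
    by (rule node_tensor_cong_above[OF lo_node[OF assms] idx_lo[OF assms]]) auto
  then show ?thesis using node_tensor_nonterm[OF assms, of "a(idx F v := False)"] by simp
qed

lemma node_tensor_hi_cofactor:
  assumes "v \<in> nonterms F"
  shows "\<Phi> v (a(idx F v := True)) = whi F v * \<Phi> (hi F v) a"
proof -
  have "\<Phi> (hi F v) (a(idx F v := True)) = \<Phi> (hi F v) a"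
    by (rule node_tensor_cong_above[OF hi_node[OF assms] idx_hi[OF assms]]) auto
  then show ?thesis using node_tensor_nonterm[OF assms, of "a(idx F v := True)"] by simp
qed

lemma ex_term: "v \<in> nodes F \<Longrightarrow> \<exists>t. t \<in> terms F"
proof (induction "rank v" arbitrary: v rule: less_induct)
  case less
  then show ?case using rank_lo lo_node nonterm_if_not_term by blast
qed

lemma not_RR3_if_reduced:
  assumes "reduced_tdd I F"
  shows "\<not> RR3_applicable F"
proof
  assume "RR3_applicable F"
  then obtain v where v: "v \<in> nonterms F" "lo F v = hi F v" "wlo F v = whi F v"
    "wlo F v = 0 \<or> wlo F v = 1" unfolding RR3_applicable_def by blast
  have scaled: "\<Phi> v a = wlo F v * \<Phi> (lo F v) a" for a
    using node_tensor_nonterm[OF v(1)] v(2,3) by (simp add: algebra_simps)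
  show False using v(4)
  proof
    assume "wlo F v = 0"
    then have "zero_tensor I (\<Phi> v)" using scaled unfolding zero_tensor_def by simp
    then show False using assms nonterm_node[OF v(1)] unfolding reduced_tdd_def by blast
  next
    assume "wlo F v = 1"
    then have "tensor_eq I (\<Phi> v) (\<Phi> (lo F v))" using scaled unfolding tensor_eq_def by simp
    moreover have "v \<noteq> lo F v" using rank_lo[OF v(1)] by auto
    ultimately show False
      using assms nonterm_node[OF v(1)] lo_node[OF v(1)] unfolding reduced_tdd_def by blast
  qed
qed

lemma not_RR4_if_reduced:
  assumes "reduced_tdd I F"
  shows "\<not> RR4_applicable F"
proof
  assume "RR4_applicable F"
  then obtain u v where "u \<in> nonterms F" "v \<in> nonterms F" "u \<noteq> v" "idx F u = idx F v"
    "lo F u = lo F v" "hi F u = hi F v" "wlo F u = wlo F v" "whi F u = whi F v"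
    unfolding RR4_applicable_def by blast
  then have "u \<in> nodes F" "v \<in> nodes F" "u \<noteq> v" "tensor_eq I (\<Phi> u) (\<Phi> v)"
    using node_tensor_nonterm nonterm_node unfolding tensor_eq_def by metis+
  then show False using assms unfolding reduced_tdd_def by blast
qed

lemma no_RR_if_reduced:
  assumes "reduced_tdd I F"
  shows "\<not> (RR1_applicable F \<or> RR2_applicable F \<or> RR3_applicable F \<or> RR4_applicable F)"
proof -
  obtain t where "terms F = {t}" "val F t = 1"
    "\<forall>v\<in>nonterms F. (wlo F v = 0 \<longrightarrow> lo F v = t) \<and> (whi F v = 0 \<longrightarrow> hi F v = t)"
    "wroot F = 0 \<longrightarrow> root F = t"
    using assms unfolding reduced_tdd_def by blast
  then have "\<not> RR1_applicable F" "\<not> RR2_applicable F"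
    unfolding RR1_applicable_def RR2_applicable_def using reachable by auto
  then show ?thesis using not_RR3_if_reduced[OF assms] not_RR4_if_reduced[OF assms] by blast
qed

end

locale normal_tdd_no_RR = wf_ordered_tdd +
  assumes normal: "normal_tdd I F"
    and no_RR1: "\<not> RR1_applicable F" and no_RR2: "\<not> RR2_applicable F"
    and no_RR3: "\<not> RR3_applicable F" and no_RR4: "\<not> RR4_applicable F"
begin

lemma normal_node: "v \<in> nodes F \<Longrightarrow> normal_tensor I (\<Phi> v)"
  using normal unfolding normal_tdd_def by auto

lemma term_val: assumes "t \<in> terms F" shows "val F t = 1"
proof -
  have "val F t \<noteq> 0" using no_RR1 assms unfolding RR1_applicable_def by auto
  then show ?thesis
    using normal_node[of t] assms terms_nodes all_false_in_asg node_tensor_term[OF assms]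
    unfolding normal_tensor_def zero_tensor_def by auto
qed

lemma term_unique: "s \<in> terms F \<Longrightarrow> t \<in> terms F \<Longrightarrow> s = t"
  using no_RR1 term_val unfolding RR1_applicable_def by blast

lemma lo_term_if_weight_0: "v \<in> nonterms F \<Longrightarrow> wlo F v = 0 \<Longrightarrow> lo F v \<in> terms F"
  and hi_term_if_weight_0: "v \<in> nonterms F \<Longrightarrow> whi F v = 0 \<Longrightarrow> hi F v \<in> terms F"
  using no_RR2 unfolding RR2_applicable_def by auto

lemma node_tensor_nonzero: "v \<in> nodes F \<Longrightarrow> \<not> zero_tensor I (\<Phi> v)"
proof (induction "rank v" arbitrary: v rule: less_induct)
  case less
  show ?case
  proof (cases "v \<in> terms F")
    case True
    then show ?thesis
      using all_false_in_asg node_tensor_term term_val unfolding zero_tensor_def by fastforce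
  next
    case False
    then have v: "v \<in> nonterms F" using less nonterm_if_not_term by blast
    show ?thesis
    proof
      assume zero: "zero_tensor I (\<Phi> v)"
      obtain a where a: "a \<in> asg I" "\<Phi> (lo F v) a \<noteq> 0"
        using less(1)[OF rank_lo[OF v] lo_node[OF v]] unfolding zero_tensor_def by blast
      have "\<Phi> v (a(idx F v := False)) = 0"
        using zero asg_upd[OF a(1) idx_in_I[OF v]] unfolding zero_tensor_def by blast
      then have lo0: "wlo F v = 0" using node_tensor_lo_cofactor[OF v, of a] a(2) by simp
      obtain b where b: "b \<in> asg I" "\<Phi> (hi F v) b \<noteq> 0"
        using less(1)[OF rank_hi[OF v] hi_node[OF v]] unfolding zero_tensor_def by blast
      have "\<Phi> v (b(idx F v := True)) = 0"
        using zero asg_upd[OF b(1) idx_in_I[OF v]] unfolding zero_tensor_def by blast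
      then have hi0: "whi F v = 0" using node_tensor_hi_cofactor[OF v, of b] b(2) by simp
      have "lo F v = hi F v"
        using term_unique[OF lo_term_if_weight_0[OF v lo0] hi_term_if_weight_0[OF v hi0]] .
      then show False using no_RR3 v lo0 hi0 unfolding RR3_applicable_def by auto
    qed
  qed
qed

lemma indep_of_own_index:
  assumes v: "v \<in> nonterms F" and indep: "indep_of I (\<Phi> v) (idx F v)"
  shows "wlo F v = 1" "whi F v = 1" "tensor_eq I (\<Phi> (lo F v)) (\<Phi> (hi F v))"
proof -
  have lo: "\<Phi> v a = wlo F v * \<Phi> (lo F v) a" and hi: "\<Phi> v a = whi F v * \<Phi> (hi F v) a"
    if "a \<in> asg I" for a
    using indep_ofD[OF indep that, of False] indep_ofD[OF indep that, of True]
      node_tensor_lo_cofactor[OF v, of a] node_tensor_hi_cofactor[OF v, of a] by simp_all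
  have v_node: "v \<in> nodes F" using nonterm_node[OF v] .
  show "wlo F v = 1"
    using normal_tensor_scaled_eq_1[OF finite_I normal_node[OF v_node] normal_node[OF lo_node[OF v]]
      node_tensor_nonzero[OF v_node]] lo by blast
  moreover show "whi F v = 1"
    using normal_tensor_scaled_eq_1[OF finite_I normal_node[OF v_node] normal_node[OF hi_node[OF v]]
      node_tensor_nonzero[OF v_node]] hi by blast
  ultimately show "tensor_eq I (\<Phi> (lo F v)) (\<Phi> (hi F v))"
    using lo hi unfolding tensor_eq_def by simp
qed

lemma node_tensor_neq_if_idx_less:
  assumes u: "u \<in> nonterms F" and v: "v \<in> nodes F" "v \<in> nonterms F \<Longrightarrow> idx F u < idx F v"
    and children: "tensor_eq I (\<Phi> (lo F u)) (\<Phi> (hi F u)) \<Longrightarrow> lo F u = hi F u"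
  shows "\<not> tensor_eq I (\<Phi> u) (\<Phi> v)"
proof
  assume eq: "tensor_eq I (\<Phi> u) (\<Phi> v)"
  have "indep_of I (\<Phi> u) (idx F u)"
    by (rule indep_of_tensor_eq[OF eq idx_in_I[OF u] node_tensor_indep_of_below[OF v]])
  then have "wlo F u = 1" "whi F u = 1" "lo F u = hi F u"
    using indep_of_own_index[OF u] children by auto
  then show False using no_RR3 u unfolding RR3_applicable_def by auto
qed

lemma weighted_nodes_eq:
  assumes "p \<in> nodes F" "q \<in> nodes F"
    and "tensor_eq I (\<Phi> p) (\<Phi> q) \<Longrightarrow> p = q"
    and "wp = 0 \<Longrightarrow> p \<in> terms F" "wq = 0 \<Longrightarrow> q \<in> terms F"
    and eq: "\<forall>a\<in>asg I. wp * \<Phi> p a = wq * \<Phi> q a"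
  shows "p = q \<and> wp = wq"
proof (cases "wp = 0")
  case True
  obtain a where "a \<in> asg I" "\<Phi> q a \<noteq> 0"
    using node_tensor_nonzero[OF assms(2)] unfolding zero_tensor_def by blast
  then have "wq = 0" using eq True by auto
  then show ?thesis using True assms(4,5) term_unique by blast
next
  case False
  then have "\<forall>a\<in>asg I. \<Phi> p a = (wq / wp) * \<Phi> q a" using eq by (auto simp: field_simps)
  then have "wq / wp = 1"
    by (rule normal_tensor_scaled_eq_1[OF finite_I normal_node[OF assms(1)] normal_node[OF assms(2)]
          node_tensor_nonzero[OF assms(1)]])
  then have "wq = wp" using False by simp
  moreover have "tensor_eq I (\<Phi> p) (\<Phi> q)" using eq False \<open>wq = wp\<close> unfolding tensor_eq_def by auto
  ultimately show ?thesis using assms(3) by auto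
qed

lemma same_idx_nodes_eq:
  assumes u: "u \<in> nonterms F" and v: "v \<in> nonterms F" and idx: "idx F u = idx F v"
    and eq: "tensor_eq I (\<Phi> u) (\<Phi> v)"
    and lo: "tensor_eq I (\<Phi> (lo F u)) (\<Phi> (lo F v)) \<Longrightarrow> lo F u = lo F v"
    and hi: "tensor_eq I (\<Phi> (hi F u)) (\<Phi> (hi F v)) \<Longrightarrow> hi F u = hi F v"
  shows "u = v"
proof -
  have cofactors: "\<Phi> u (a(idx F u := b)) = \<Phi> v (a(idx F u := b))" if "a \<in> asg I" for a b
    using eq asg_upd[OF that idx_in_I[OF u]] unfolding tensor_eq_def by blast
  have "lo F u = lo F v \<and> wlo F u = wlo F v"
  proof (rule weighted_nodes_eq[OF lo_node[OF u] lo_node[OF v] lo])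
    show "\<forall>a\<in>asg I. wlo F u * \<Phi> (lo F u) a = wlo F v * \<Phi> (lo F v) a"
      using cofactors[of _ False] node_tensor_lo_cofactor[OF u] node_tensor_lo_cofactor[OF v] idx
      by simp
  qed (use lo_term_if_weight_0 u v in auto)
  moreover have "hi F u = hi F v \<and> whi F u = whi F v"
  proof (rule weighted_nodes_eq[OF hi_node[OF u] hi_node[OF v] hi])
    show "\<forall>a\<in>asg I. whi F u * \<Phi> (hi F u) a = whi F v * \<Phi> (hi F v) a"
      using cofactors[of _ True] node_tensor_hi_cofactor[OF u] node_tensor_hi_cofactor[OF v] idx
      by simp
  qed (use hi_term_if_weight_0 u v in auto)
  ultimately show ?thesis using no_RR4 u v idx unfolding RR4_applicable_def by blast
qed

(* The induction is on the maximum rather than the sum of the ranks because the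
   lower-index case compares the two children of u with each other. *)
lemma node_tensor_inj:
  "u \<in> nodes F \<Longrightarrow> v \<in> nodes F \<Longrightarrow> tensor_eq I (\<Phi> u) (\<Phi> v) \<Longrightarrow> u = v"
proof (induction "max (rank u) (rank v)" arbitrary: u v rule: less_induct)
  case less
  have IH: "p = q" if "p \<in> nodes F" "q \<in> nodes F" "tensor_eq I (\<Phi> p) (\<Phi> q)"
    "rank p < max (rank u) (rank v)" "rank q < max (rank u) (rank v)" for p q
    using less.hyps[OF _ that(1-3)] that(4,5) by simp
  have children: "lo F w = hi F w"
    if "w \<in> nonterms F" "rank w \<le> max (rank u) (rank v)" "tensor_eq I (\<Phi> (lo F w)) (\<Phi> (hi F w))"
    for w
    using IH[OF lo_node[OF that(1)] hi_node[OF that(1)] that(3)] rank_lo[OF that(1)]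
      rank_hi[OF that(1)] that(2) by linarith
  have eq_sym: "tensor_eq I (\<Phi> v) (\<Phi> u)" using less.prems(3) unfolding tensor_eq_def by simp
  consider (terms) "u \<in> terms F" "v \<in> terms F"
    | (u_lower) "u \<in> nonterms F" "v \<in> nonterms F \<Longrightarrow> idx F u < idx F v"
    | (v_lower) "v \<in> nonterms F" "u \<in> nonterms F \<Longrightarrow> idx F v < idx F u"
    | (same_idx) "u \<in> nonterms F" "v \<in> nonterms F" "idx F u = idx F v"
    by (metis less.prems(1,2) nonterm_if_not_term nonterm_not_term linorder_neqE)
  then show ?case
  proof cases
    case terms
    then show ?thesis using term_unique by blast
  next
    case u_lower
    then show ?thesis
      using node_tensor_neq_if_idx_less[OF u_lower(1) less.prems(2) u_lower(2)
          children[OF u_lower(1) max.cobounded1]]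
        less.prems(3) by blast
  next
    case v_lower
    then show ?thesis
      using node_tensor_neq_if_idx_less[OF v_lower(1) less.prems(1) v_lower(2)
          children[OF v_lower(1) max.cobounded2]]
        eq_sym by blast
  next
    case same_idx
    have "lo F u = lo F v" if "tensor_eq I (\<Phi> (lo F u)) (\<Phi> (lo F v))"
      using IH[OF lo_node[OF same_idx(1)] lo_node[OF same_idx(2)] that]
        rank_lo[OF same_idx(1)] rank_lo[OF same_idx(2)] by linarith
    moreover have "hi F u = hi F v" if "tensor_eq I (\<Phi> (hi F u)) (\<Phi> (hi F v))"
      using IH[OF hi_node[OF same_idx(1)] hi_node[OF same_idx(2)] that]
        rank_hi[OF same_idx(1)] rank_hi[OF same_idx(2)] by linarith
    ultimately show ?thesis using same_idx_nodes_eq[OF same_idx less.prems(3)] by blast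
  qed
qed

lemma reduced: "reduced_tdd I F"
proof -
  obtain t where t: "t \<in> terms F" using ex_term root_node by blast
  then have terms: "terms F = {t}" using term_unique by blast
  have "wroot F = 0 \<longrightarrow> root F = t" using no_RR2 terms root_node unfolding RR2_applicable_def by auto
  then show ?thesis
    unfolding reduced_tdd_def using normal node_tensor_nonzero node_tensor_inj terms term_val[OF t]
      lo_term_if_weight_0 hi_term_if_weight_0 by blast
qed

end

theorem theorem4:
  fixes I :: "'i::linorder set" and F :: "('v, 'i) tdd"
  assumes "is_tdd I F" and "ordered_tdd F" and "normal_tdd I F"
  shows "reduced_tdd I F \<longleftrightarrow>
    \<not> (RR1_applicable F \<or> RR2_applicable F \<or> RR3_applicable F \<or> RR4_applicable F)"
proof
  interpret wf_ordered_tdd I F using assms(1,2) by unfold_locales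
  show "reduced_tdd I F \<Longrightarrow> \<not> (RR1_applicable F \<or> RR2_applicable F \<or> RR3_applicable F \<or> RR4_applicable F)"
    by (rule no_RR_if_reduced)
next
  assume "\<not> (RR1_applicable F \<or> RR2_applicable F \<or> RR3_applicable F \<or> RR4_applicable F)"
  then interpret normal_tdd_no_RR I F using assms by unfold_locales auto
  show "reduced_tdd I F" by (rule reduced)
qed

end
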